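(* Let $M$ be a von Neumann algebra, $\omega$ a faithful normal state on $M$, and $T:M\to M$ a positive linear map with $T(I)\le I$. Suppose there exists $\delta>0$ such that for all $k\ge0$, \[ \omega(T^k(d(T)))\in\{0\}\cup[\delta,\infty). \] Then the stabilization index satisfies $n_T\le\lfloor 1/\delta\rfloor$.
   Context: $d(T)=I-T(I)\ge0$ is the defect; $T^0=\mathrm{id}$. The stabilization index is $n_T=\min\{n\ge1:T^n(d(T))=0\}$. A state $\omega$ is faithful if $\omega(x)=0$ with $x\ge0$ implies $x=0$. *)

theory Defs
  imports "HOL-Analysis.Analysis" "HOL-Library.Function_Algebras"
begin

text \<open>Concrete model of a complex Hilbert space: every complex Hilbert space is
  unitarily isomorphic to l2(I) for some index set I; we take I = UNIV :: 'i set
  (an arbitrary type).\<close>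

type_synonym 'i vec = "'i \<Rightarrow> complex"
type_synonym 'i op = "'i vec \<Rightarrow> 'i vec"

definition l2 :: "'i vec set" where
  "l2 = {f. (\<lambda>i. (cmod (f i))\<^sup>2) summable_on UNIV}"

definition ip :: "'i vec \<Rightarrow> 'i vec \<Rightarrow> complex" where
  "ip f g = (\<Sum>\<^sub>\<infinity>i. cnj (f i) * g i)"

definition l2norm :: "'i vec \<Rightarrow> real" where
  "l2norm f = sqrt (\<Sum>\<^sub>\<infinity>i. (cmod (f i))\<^sup>2)"

definition vscale :: "complex \<Rightarrow> 'i vec \<Rightarrow> 'i vec" where
  "vscale c f = (\<lambda>i. c * f i)"

text \<open>Bounded operators on l2, with canonical representative (zero off l2).\<close>
definition bounded_op :: "'i op \<Rightarrow> bool" where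
  "bounded_op A \<longleftrightarrow>
     (\<forall>f\<in>l2. A f \<in> l2) \<and> (\<forall>f. f \<notin> l2 \<longrightarrow> A f = 0) \<and>
     (\<forall>f\<in>l2. \<forall>g\<in>l2. A (f + g) = A f + A g) \<and>
     (\<forall>f\<in>l2. \<forall>c. A (vscale c f) = vscale c (A f)) \<and>
     (\<exists>C. \<forall>f\<in>l2. l2norm (A f) \<le> C * l2norm f)"

definition id_op :: "'i op" where
  "id_op f = (if f \<in> l2 then f else 0)"

definition op_scale :: "complex \<Rightarrow> 'i op \<Rightarrow> 'i op" where
  "op_scale c A = (\<lambda>f. vscale c (A f))"

definition is_adjoint :: "'i op \<Rightarrow> 'i op \<Rightarrow> bool" where
  "is_adjoint A B \<longleftrightarrow> bounded_op B \<and> (\<forall>f\<in>l2. \<forall>g\<in>l2. ip (A f) g = ip f (B g))"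

definition self_adjoint :: "'i op \<Rightarrow> bool" where
  "self_adjoint A \<longleftrightarrow> bounded_op A \<and> is_adjoint A A"

text \<open>Positive operator: <f, A f> >= 0 for all f (on a complex Hilbert space this
  forces self-adjointness).\<close>
definition pos_op :: "'i op \<Rightarrow> bool" where
  "pos_op A \<longleftrightarrow> bounded_op A \<and> (\<forall>f\<in>l2. ip f (A f) \<in> \<real> \<and> 0 \<le> Re (ip f (A f)))"

definition op_le :: "'i op \<Rightarrow> 'i op \<Rightarrow> bool" where
  "op_le A B \<longleftrightarrow> self_adjoint A \<and> self_adjoint B \<and> pos_op (B - A)"

definition commutant :: "'i op set \<Rightarrow> 'i op set" where
  "commutant S = {B. bounded_op B \<and> (\<forall>A\<in>S. A \<circ> B = B \<circ> A)}"

definition von_neumann_algebra :: "'i op set \<Rightarrow> bool" where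
  "von_neumann_algebra M \<longleftrightarrow>
     M \<subseteq> Collect bounded_op \<and> (\<forall>A\<in>M. \<exists>B\<in>M. is_adjoint A B) \<and>
     commutant (commutant M) = M"

definition state_on :: "'i op set \<Rightarrow> ('i op \<Rightarrow> complex) \<Rightarrow> bool" where
  "state_on M \<omega> \<longleftrightarrow>
     (\<forall>x\<in>M. \<forall>y\<in>M. \<omega> (x + y) = \<omega> x + \<omega> y) \<and>
     (\<forall>x\<in>M. \<forall>c. \<omega> (op_scale c x) = c * \<omega> x) \<and>
     (\<forall>x\<in>M. pos_op x \<longrightarrow> \<omega> x \<in> \<real> \<and> 0 \<le> Re (\<omega> x)) \<and>
     \<omega> id_op = 1"

definition faithful_on :: "'i op set \<Rightarrow> ('i op \<Rightarrow> complex) \<Rightarrow> bool" where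
  "faithful_on M \<omega> \<longleftrightarrow> (\<forall>x\<in>M. pos_op x \<longrightarrow> \<omega> x = 0 \<longrightarrow> x = 0)"

text \<open>Normality: for every bounded increasing net (upward directed nonempty family)
  of self-adjoint elements of M with supremum x (least upper bound among the
  self-adjoint bounded operators), omega(x) = sup omega(x_alpha).\<close>
definition normal_on :: "'i op set \<Rightarrow> ('i op \<Rightarrow> complex) \<Rightarrow> bool" where
  "normal_on M \<omega> \<longleftrightarrow>
     (\<forall>D x. D \<subseteq> M \<and> D \<noteq> {} \<and> (\<forall>a\<in>D. self_adjoint a) \<and>
        (\<forall>a\<in>D. \<forall>b\<in>D. \<exists>c\<in>D. op_le a c \<and> op_le b c) \<and>
        x \<in> M \<and> (\<forall>a\<in>D. op_le a x) \<and>
        (\<forall>y. self_adjoint y \<and> (\<forall>a\<in>D. op_le a y) \<longrightarrow> op_le x y)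
      \<longrightarrow> Re (\<omega> x) = (SUP a\<in>D. Re (\<omega> a)))"

definition positive_linear_map :: "'i op set \<Rightarrow> ('i op \<Rightarrow> 'i op) \<Rightarrow> bool" where
  "positive_linear_map M T \<longleftrightarrow>
     (\<forall>x\<in>M. T x \<in> M) \<and>
     (\<forall>x\<in>M. \<forall>y\<in>M. T (x + y) = T x + T y) \<and>
     (\<forall>x\<in>M. \<forall>c. T (op_scale c x) = op_scale c (T x)) \<and>
     (\<forall>x\<in>M. pos_op x \<longrightarrow> pos_op (T x))"

definition defect :: "('i op \<Rightarrow> 'i op) \<Rightarrow> 'i op" where
  "defect T = id_op - T id_op"

definition stab_index :: "('i op \<Rightarrow> 'i op) \<Rightarrow> nat" where
  "stab_index T = (LEAST n. 1 \<le> n \<and> (T ^^ n) (defect T) = 0)"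

end

theory Submission
  imports Defs
begin

text \<open>Writing \<open>d = d(T)\<close>, additivity of \<open>T\<^sup>k\<close> applied to \<open>I = d + T(I)\<close> telescopes to
  \<open>1 = \<omega>(I) = (\<Sum>k<n. \<omega>(T\<^sup>k d)) + \<omega>(T\<^sup>n I)\<close>, where every term is nonnegative by positivity.
  By faithfulness, each of the first \<open>n\<close> terms with \<open>T\<^sup>k d \<noteq> 0\<close> is at least \<open>\<delta>\<close>, so at most
  \<open>\<lfloor>1/\<delta>\<rfloor>\<close> consecutive iterates of the defect can be nonzero.\<close>

lemma bounded_op_zero:
  fixes A :: "'i op"
  assumes "bounded_op A"
  shows "A 0 = 0"
proof (cases "(0::'i vec) \<in> l2")
  case True
  then have "A (0 + 0) = A 0 + A 0" using assms unfolding bounded_op_def by blast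
  then show ?thesis by simp
qed (use assms in \<open>auto simp: bounded_op_def\<close>)

lemma bounded_op_diff:
  fixes A :: "'i op"
  assumes A: "bounded_op A" and u: "u \<in> l2" and v: "v \<in> l2"
  shows "A (u - v) = A u - A v"
proof -
  have neg_v: "vscale (-1) v \<in> l2" using v unfolding l2_def vscale_def by simp
  have "u - v = u + vscale (-1) v" unfolding vscale_def by auto
  then have "A (u - v) = A (u + vscale (-1) v)" by (simp only:)
  also have "\<dots> = A u + A (vscale (-1) v)"
    using A u neg_v unfolding bounded_op_def by blast
  also have "A (vscale (-1) v) = vscale (-1) (A v)"
    using A v unfolding bounded_op_def by blast
  also have "vscale (-1) (A v) = - A v" unfolding vscale_def by auto
  finally show ?thesis by (metis diff_conv_add_uminus)
qed

lemma pos_op_id_op: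
  assumes "bounded_op (id_op :: 'i op)"
  shows "pos_op (id_op :: 'i op)"
  unfolding pos_op_def
proof (rule conjI[OF assms], intro ballI)
  fix f :: "'i vec" assume f: "f \<in> l2"
  let ?s = "\<Sum>\<^sub>\<infinity>i. (cmod (f i))\<^sup>2"
  have "((\<lambda>i. (cmod (f i))\<^sup>2) has_sum ?s) UNIV"
    using f unfolding l2_def by simp
  then have "((\<lambda>i. complex_of_real ((cmod (f i))\<^sup>2)) has_sum complex_of_real ?s) UNIV"
    by (rule has_sum_of_real)
  moreover have "(\<lambda>i. complex_of_real ((cmod (f i))\<^sup>2)) = (\<lambda>i. cnj (f i) * f i)"
    by (metis complex_norm_square mult.commute)
  ultimately have "ip f (id_op f) = complex_of_real ?s"
    unfolding ip_def id_op_def using f by (simp add: infsumI)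
  moreover have "?s \<ge> 0" by (simp add: infsum_nonneg)
  ultimately show "ip f (id_op f) \<in> \<real> \<and> 0 \<le> Re (ip f (id_op f))" by simp
qed

lemma bounded_op_comp_id_op: "bounded_op (A :: 'i op) \<Longrightarrow> A \<circ> id_op = id_op \<circ> A"
  by (rule ext) (auto simp: id_op_def bounded_op_def bounded_op_zero)

lemma bounded_op_comp_id_op_minus:
  fixes A X :: "'i op"
  assumes A: "bounded_op A" and X: "bounded_op X" and AX: "A \<circ> X = X \<circ> A"
  shows "A \<circ> (id_op - X) = (id_op - X) \<circ> A"
proof
  fix f :: "'i vec"
  show "(A \<circ> (id_op - X)) f = ((id_op - X) \<circ> A) f"
  proof (cases "f \<in> l2")
    case True
    then have "A f \<in> l2" and "X f \<in> l2" using A X unfolding bounded_op_def by auto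
    moreover have "A (X f) = X (A f)" using AX by (metis comp_apply)
    ultimately show ?thesis using True bounded_op_diff[OF A True] by (simp add: id_op_def)
  next
    case False
    then have "A f = 0" and "(id_op - X) f = 0"
      using A X unfolding bounded_op_def by (auto simp: id_op_def)
    moreover have "(id_op - X) 0 = 0"
      using bounded_op_zero[OF X] by (simp add: id_op_def)
    ultimately show ?thesis using bounded_op_zero[OF A] by simp
  qed
qed

lemma von_neumann_algebra_memI:
  assumes "von_neumann_algebra M" and "bounded_op B"
    and "\<And>A. A \<in> commutant M \<Longrightarrow> A \<circ> B = B \<circ> A"
  shows "B \<in> M"
  using assms unfolding von_neumann_algebra_def commutant_def by blast

lemma von_neumann_algebra_id_op:
  assumes "von_neumann_algebra M" and "bounded_op (id_op :: 'i op)"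
  shows "(id_op :: 'i op) \<in> M"
  using assms by (intro von_neumann_algebra_memI) (auto simp: commutant_def bounded_op_comp_id_op)

lemma von_neumann_algebra_id_op_minus:
  assumes M: "von_neumann_algebra M" and "X \<in> M" and "bounded_op (id_op - X)"
  shows "id_op - X \<in> M"
proof (rule von_neumann_algebra_memI[OF M \<open>bounded_op (id_op - X)\<close>])
  fix A assume "A \<in> commutant M"
  moreover have "bounded_op X" using M \<open>X \<in> M\<close> unfolding von_neumann_algebra_def by blast
  ultimately have "bounded_op A" "bounded_op X" "A \<circ> X = X \<circ> A"
    using \<open>X \<in> M\<close> unfolding commutant_def by auto
  then show "A \<circ> (id_op - X) = (id_op - X) \<circ> A" by (rule bounded_op_comp_id_op_minus)
qed

locale subunital_positive_map =
  fixes M :: "'i op set" and T :: "'i op \<Rightarrow> 'i op"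
  assumes von_neumann: "von_neumann_algebra M"
    and positive_linear: "positive_linear_map M T"
    and subunital: "op_le (T id_op) id_op"
begin

lemma map_mem: "x \<in> M \<Longrightarrow> T x \<in> M"
  using positive_linear unfolding positive_linear_map_def by blast

lemma map_add: "x \<in> M \<Longrightarrow> y \<in> M \<Longrightarrow> T (x + y) = T x + T y"
  using positive_linear unfolding positive_linear_map_def by blast

lemma map_pos: "x \<in> M \<Longrightarrow> pos_op x \<Longrightarrow> pos_op (T x)"
  using positive_linear unfolding positive_linear_map_def by blast

lemma funpow_mem: "x \<in> M \<Longrightarrow> (T ^^ k) x \<in> M"
  by (induction k) (auto intro: map_mem)

lemma funpow_pos: "x \<in> M \<Longrightarrow> pos_op x \<Longrightarrow> pos_op ((T ^^ k) x)"
  by (induction k) (auto intro: map_pos funpow_mem)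

lemma funpow_add: "x \<in> M \<Longrightarrow> y \<in> M \<Longrightarrow> (T ^^ k) (x + y) = (T ^^ k) x + (T ^^ k) y"
  by (induction k) (auto simp: map_add funpow_mem)

lemma pos_id_op: "pos_op (id_op :: 'i op)"
  using subunital pos_op_id_op unfolding op_le_def self_adjoint_def by blast

lemma id_op_mem: "id_op \<in> M"
  using von_neumann pos_id_op von_neumann_algebra_id_op unfolding pos_op_def by blast

lemma pos_defect: "pos_op (defect T)"
  using subunital unfolding op_le_def defect_def by blast

lemma defect_mem: "defect T \<in> M"
  using von_neumann_algebra_id_op_minus[OF von_neumann map_mem[OF id_op_mem]] pos_defect
  unfolding defect_def pos_op_def by blast

lemma funpow_id_op_split: "(T ^^ k) id_op = (T ^^ k) (defect T) + (T ^^ Suc k) id_op"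
proof -
  have "(T ^^ k) id_op = (T ^^ k) (defect T + T id_op)" by (simp add: defect_def)
  also have "\<dots> = (T ^^ k) (defect T) + (T ^^ Suc k) id_op"
    using funpow_add[OF defect_mem map_mem[OF id_op_mem]] by (simp add: funpow_swap1)
  finally show ?thesis .
qed

lemma state_defect_orbit_telescope:
  assumes "state_on M \<omega>"
  shows "(\<Sum>k<n. \<omega> ((T ^^ k) (defect T))) + \<omega> ((T ^^ n) id_op) = 1"
proof (induction n)
  case 0
  then show ?case using assms unfolding state_on_def by simp
next
  case (Suc n)
  have "\<omega> ((T ^^ n) id_op) = \<omega> ((T ^^ n) (defect T)) + \<omega> ((T ^^ Suc n) id_op)"
    using assms funpow_mem[OF defect_mem] funpow_mem[OF id_op_mem]
    unfolding state_on_def funpow_id_op_split[of n] by blast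
  with Suc show ?case by (simp add: add.assoc)
qed

lemma state_defect_orbit_sum_le_one:
  assumes "state_on M \<omega>"
  shows "(\<Sum>k<n. Re (\<omega> ((T ^^ k) (defect T)))) \<le> 1"
proof -
  have "0 \<le> Re (\<omega> ((T ^^ n) id_op))"
    using assms funpow_mem[OF id_op_mem] funpow_pos[OF id_op_mem pos_id_op]
    unfolding state_on_def by blast
  moreover have "(\<Sum>k<n. Re (\<omega> ((T ^^ k) (defect T)))) + Re (\<omega> ((T ^^ n) id_op)) = 1"
    using arg_cong[OF state_defect_orbit_telescope[OF assms, of n], of Re] by simp
  ultimately show ?thesis by linarith
qed

lemma faithful_defect_orbit_nonzero:
  assumes "faithful_on M \<omega>" and "(T ^^ k) (defect T) \<noteq> 0"
  shows "\<omega> ((T ^^ k) (defect T)) \<noteq> 0"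
  using assms funpow_mem[OF defect_mem] funpow_pos[OF defect_mem pos_defect]
  unfolding faithful_on_def by blast

end

lemma le_nat_floor_inverse:
  fixes \<delta> :: real
  assumes "0 < \<delta>" and "(\<Sum>k<n. a k) \<le> 1" and "\<And>k. k < n \<Longrightarrow> \<delta> \<le> a k"
  shows "n \<le> nat \<lfloor>1 / \<delta>\<rfloor>"
proof -
  have "real n * \<delta> \<le> (\<Sum>k<n. a k)"
    using sum_mono[of "{..<n}" "\<lambda>_. \<delta>" a] assms(3) by simp
  then have "real n \<le> 1 / \<delta>" using assms(1,2) by (simp add: field_simps)
  then have "int n \<le> \<lfloor>1 / \<delta>\<rfloor>" by (simp add: le_floor_iff)
  then show ?thesis by (metis nat_int nat_mono)
qed

theorem proposition7p23:
  fixes M :: "'i op set" and \<omega> :: "'i op \<Rightarrow> complex"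
    and T :: "'i op \<Rightarrow> 'i op" and \<delta> :: real
  assumes "von_neumann_algebra M"
    and "state_on M \<omega>" and "normal_on M \<omega>" and "faithful_on M \<omega>"
    and "positive_linear_map M T"
    and "op_le (T id_op) id_op"
    and "T id_op \<noteq> id_op"
    and "\<delta> > 0"
    and "\<forall>k. \<omega> ((T ^^ k) (defect T)) = 0 \<or>
             (\<omega> ((T ^^ k) (defect T)) \<in> \<real> \<and> \<delta> \<le> Re (\<omega> ((T ^^ k) (defect T))))"
  shows "(\<exists>n\<ge>1. (T ^^ n) (defect T) = 0) \<and> stab_index T \<le> nat \<lfloor>1 / \<delta>\<rfloor>"
proof -
  interpret subunital_positive_map M T using assms(1,5,6) by unfold_locales
  define N where "N = nat \<lfloor>1 / \<delta>\<rfloor>"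
  have "\<exists>k\<le>N. (T ^^ k) (defect T) = 0"
  proof (rule ccontr)
    assume "\<not> ?thesis"
    then have "\<delta> \<le> Re (\<omega> ((T ^^ k) (defect T)))" if "k < Suc N" for k
      using that faithful_defect_orbit_nonzero[OF assms(4)] assms(9) by (auto simp: less_Suc_eq_le)
    then have "Suc N \<le> N"
      unfolding N_def
      by (rule le_nat_floor_inverse[OF assms(8) state_defect_orbit_sum_le_one[OF assms(2)]])
    then show False by simp
  qed
  then obtain k where "k \<le> N" and vanish: "(T ^^ k) (defect T) = 0" by blast
  moreover have "1 \<le> k"
    using vanish assms(7) by (cases k) (auto simp: defect_def)
  moreover have "stab_index T \<le> k"
    unfolding stab_index_def using vanish \<open>1 \<le> k\<close> by (auto intro: Least_le)
  ultimately show ?thesis unfolding N_def by auto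
qed

end
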